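(* (1) For $1\le k\le m-1$, the map $\psi_k:A_k\to(A_0)^{p^k}$, $f\mapsto\big(f(\chi_1\xi_m,\dots,\chi_k\xi_m)\big)_{(\chi_1,\dots,\chi_k)\in\mu_p^k}$, is homogeneous and injective. (2) The image of $M_m=\xi_m^p-\big(\sum_{j=1}^m z_j\xi_j\big)^p$ in $A_{m-1}$ is a non-zero divisor; i.e. multiplication by $M_m$ is an injective homogeneous $A$-linear map $A_{m-1}\to A_{m-1}$ of degree $p$. Consequently $M_1,\dots,M_m$ form a regular sequence in $A[\xi_1,\dots,\xi_m]$.
   Context: $\mu_p=\{\zeta_p^j\mid 0\le j\le p-1\}$, $\zeta_p=e^{2\pi\sqrt{-1}/p}$. $A=\mathbb C[z_1^{\pm1},\dots,z_m^{\pm1},1/R(z)]$ with $R(z)=\prod_{(i_1,\dots,i_m)\in\{1,\dots,p\}^m}(1-\zeta_p^{i_1}z_1-\cdots-\zeta_p^{i_m}z_m)$. $M_k=\xi_k^p-\xi_m^p$ for $1\le k\le m-1$; $A_0=A[\xi_m]$, $A_k=A[\xi_m,\xi_1,\dots,\xi_k]/(M_1,\dots,M_k)$, graded by total degree in the $\xi$'s. *)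

theory Defs
  imports Complex_Main "HOL-Library.Poly_Mapping" "HOL-Library.FuncSet"
begin

datatype var = Z nat | Xi nat

type_synonym mpoly = "(var \<Rightarrow>\<^sub>0 nat) \<Rightarrow>\<^sub>0 complex"

definition PV :: "var \<Rightarrow> mpoly" where
  "PV v = Poly_Mapping.single (Poly_Mapping.single v 1) 1"

definition PC :: "complex \<Rightarrow> mpoly" where
  "PC c = Poly_Mapping.single 0 c"

definition vars :: "mpoly \<Rightarrow> var set" where
  "vars F = \<Union> (Poly_Mapping.keys ` Poly_Mapping.keys F)"

definition xi_deg :: "(var \<Rightarrow>\<^sub>0 nat) \<Rightarrow> nat" where
  "xi_deg \<alpha> = (\<Sum>v\<in>Poly_Mapping.keys \<alpha>. (case v of Z _ \<Rightarrow> 0 | Xi _ \<Rightarrow> Poly_Mapping.lookup \<alpha> v))"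

definition xi_homog :: "nat \<Rightarrow> mpoly \<Rightarrow> bool" where
  "xi_homog d F \<longleftrightarrow> (\<forall>\<alpha>\<in>Poly_Mapping.keys F. xi_deg \<alpha> = d)"

definition subst :: "(var \<Rightarrow> mpoly) \<Rightarrow> mpoly \<Rightarrow> mpoly" where
  "subst \<sigma> F = (\<Sum>\<alpha>\<in>Poly_Mapping.keys F.
      PC (Poly_Mapping.lookup F \<alpha>) * (\<Prod>v\<in>Poly_Mapping.keys \<alpha>. \<sigma> v ^ Poly_Mapping.lookup \<alpha> v))"

definition zeta :: "nat \<Rightarrow> complex" where
  "zeta p = cis (2 * pi / real p)"

definition mu :: "nat \<Rightarrow> complex set" where
  "mu p = {zeta p ^ j | j. j \<le> p - 1}"

definition Rpoly :: "nat \<Rightarrow> nat \<Rightarrow> mpoly" where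
  "Rpoly m p = (\<Prod>i\<in>PiE {1..m} (\<lambda>_. {1..p}).
      1 - (\<Sum>j=1..m. PC (zeta p ^ i j) * PV (Z j)))"

text \<open>Element inverted in A = C[z^{+-1}, 1/R]: z_1 ... z_m R(z).\<close>
definition Den :: "nat \<Rightarrow> nat \<Rightarrow> mpoly" where
  "Den m p = (\<Prod>j=1..m. PV (Z j)) * Rpoly m p"

definition Mgen :: "nat \<Rightarrow> nat \<Rightarrow> nat \<Rightarrow> mpoly" where
  "Mgen m p k = (if k < m then PV (Xi k) ^ p - PV (Xi m) ^ p
                 else PV (Xi m) ^ p - (\<Sum>j=1..m. PV (Z j) * PV (Xi j)) ^ p)"

text \<open>Variables of A_k = A[xi_m, xi_1, ..., xi_k]/(M_1..M_k).\<close>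
definition Vk :: "nat \<Rightarrow> nat \<Rightarrow> var set" where
  "Vk m k = {Z j | j. 1 \<le> j \<and> j \<le> m} \<union> {Xi m} \<union> {Xi j | j. 1 \<le> j \<and> j \<le> k}"

definition in_ideal :: "nat \<Rightarrow> nat \<Rightarrow> var set \<Rightarrow> nat \<Rightarrow> mpoly \<Rightarrow> bool" where
  "in_ideal m p W k G \<longleftrightarrow>
     (\<exists>c. (\<forall>i. vars (c i) \<subseteq> W) \<and> G = (\<Sum>i=1..k. c i * Mgen m p i))"

text \<open>Elements of the localised quotient C[W][1/Den]/(M_1..M_k) are fractions F / Den^n;
  equality of fractions F/Den^n = G/Den^n' in it.\<close>
definition loc_eq :: "nat \<Rightarrow> nat \<Rightarrow> var set \<Rightarrow> nat \<Rightarrow> mpoly \<times> nat \<Rightarrow> mpoly \<times> nat \<Rightarrow> bool" where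
  "loc_eq m p W k f g \<longleftrightarrow>
     (\<exists>N. in_ideal m p W k
        (Den m p ^ N * (Den m p ^ snd g * fst f - Den m p ^ snd f * fst g)))"

text \<open>The chi-component of psi_k: f(xi_m, xi_1..xi_k) \<mapsto> f(xi_m, chi_1 xi_m, ..., chi_k xi_m).\<close>
definition psi :: "nat \<Rightarrow> nat \<Rightarrow> (nat \<Rightarrow> complex) \<Rightarrow> mpoly \<Rightarrow> mpoly" where
  "psi m k \<chi> F = subst (\<lambda>v. case v of
        Xi i \<Rightarrow> (if 1 \<le> i \<and> i \<le> k then PC (\<chi> i) * PV (Xi m) else PV v)
      | Z j \<Rightarrow> PV v) F"

definition regular_sequence :: "nat \<Rightarrow> nat \<Rightarrow> bool" where
  "regular_sequence m p \<longleftrightarrow>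
     (\<forall>i\<in>{1..m}. \<forall>F n. vars F \<subseteq> Vk m m \<longrightarrow>
        loc_eq m p (Vk m m) (i - 1) (Mgen m p i * F, n) (0, 0) \<longrightarrow>
        loc_eq m p (Vk m m) (i - 1) (F, n) (0, 0))
     \<and> \<not> loc_eq m p (Vk m m) m (1, 0) (0, 0)"

end

theory Submission
  imports Defs
begin

text \<open>For \<open>k < m\<close> the ideal \<open>(M\<^sub>1, \<dots>, M\<^sub>k)\<close> of \<open>\<complex>[W]\<close> is exactly the common kernel of the
  substitutions \<open>\<psi>\<^sub>k(\<chi>) : \<xi>\<^sub>i \<mapsto> \<chi>\<^sub>i \<xi>\<^sub>m\<close> (\<open>i \<le> k\<close>), \<open>\<chi> \<in> \<mu>\<^sub>p\<^sup>k\<close>. By induction on \<open>k\<close>: dividing by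
  \<open>M\<^sub>k = \<xi>\<^sub>k\<^sup>p - \<xi>\<^sub>m\<^sup>p\<close> as a polynomial in \<open>\<xi>\<^sub>k\<close> writes \<open>F \<equiv> \<Sum>\<^sub>r\<^sub><\<^sub>p F\<^sub>r \<xi>\<^sub>k\<^sup>r\<close> with \<open>F\<^sub>r\<close> free of \<open>\<xi>\<^sub>k\<close>;
  substituting \<open>\<xi>\<^sub>k = c \<xi>\<^sub>m\<close> for all \<open>c \<in> \<mu>\<^sub>p\<close> and inverting the discrete Fourier transform on \<open>\<mu>\<^sub>p\<close>
  shows that each \<open>F\<^sub>r\<close> lies in the common kernel of the \<open>\<psi>\<^sub>k\<^sub>-\<^sub>1(\<chi>)\<close>, hence in \<open>(M\<^sub>1, \<dots>, M\<^sub>k\<^sub>-\<^sub>1)\<close>.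
  The substitutions fix the inverted element \<open>z\<^sub>1\<cdots>z\<^sub>m R(z)\<close> and land in a domain, so localisation
  does not interfere and \<open>\<psi>\<^sub>k\<close> is injective on \<open>A\<^sub>k\<close>. Consequently \<open>H\<close> is a non-zero divisor on \<open>A\<^sub>k\<close>
  as soon as no \<open>\<psi>\<^sub>k(\<chi>)(H)\<close> vanishes; for \<open>H = M\<^sub>k\<^sub>+\<^sub>1\<close> this is seen by setting all variables except
  \<open>\<xi>\<^sub>k\<^sub>+\<^sub>1\<close> to \<open>0\<close>, which leaves \<open>\<xi>\<^sub>k\<^sub>+\<^sub>1\<^sup>p\<close>. Setting all \<open>\<xi>\<close> to \<open>0\<close> kills every \<open>M\<^sub>i\<close> but not the
  inverted element, so the final quotient is non-zero.\<close>

text \<open>Any linear order on the variables makes the polynomial type an integral domain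
  (instance \<open>poly_mapping :: idom\<close> of the library).\<close>

instantiation var :: linorder
begin

fun var_code :: "var \<Rightarrow> nat" where
  "var_code (Z n) = 2 * n"
| "var_code (Xi n) = 2 * n + 1"

definition less_eq_var :: "var \<Rightarrow> var \<Rightarrow> bool" where
  "less_eq_var a b \<longleftrightarrow> var_code a \<le> var_code b"

definition less_var :: "var \<Rightarrow> var \<Rightarrow> bool" where
  "less_var a b \<longleftrightarrow> var_code a < var_code b"

lemma var_code_inject: "var_code a = var_code b \<Longrightarrow> a = b"
  by (cases a; cases b; auto; presburger)

instance
  by standard (auto simp: less_eq_var_def less_var_def intro: var_code_inject)

end

section \<open>Polynomials in the variables \<open>z\<^sub>j\<close>, \<open>\<xi>\<^sub>j\<close>\<close>

lemma poly_mapping_sum_single: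
  "(\<Sum>a\<in>Poly_Mapping.keys f. Poly_Mapping.single a (Poly_Mapping.lookup f a)) = (f :: 'a \<Rightarrow>\<^sub>0 'b::comm_monoid_add)"
proof (rule poly_mapping_eqI)
  fix b
  show "Poly_Mapping.lookup (\<Sum>a\<in>Poly_Mapping.keys f. Poly_Mapping.single a (Poly_Mapping.lookup f a)) b
      = Poly_Mapping.lookup f b"
    by (cases "b \<in> Poly_Mapping.keys f") (auto simp: lookup_sum lookup_single when_def in_keys_iff)
qed

lemma keys_add_nat:
  "Poly_Mapping.keys (\<alpha> + (\<beta> :: 'a \<Rightarrow>\<^sub>0 nat)) = Poly_Mapping.keys \<alpha> \<union> Poly_Mapping.keys \<beta>"
  by (auto simp: in_keys_iff lookup_add)

lemma single_eq_0_iff [simp]: "Poly_Mapping.single a c = 0 \<longleftrightarrow> c = 0"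
  by (metis lookup_single_eq lookup_zero single_zero)

lemma PC_0 [simp]: "PC 0 = 0"
  by (simp add: PC_def)

lemma PC_1 [simp]: "PC 1 = 1"
  by (simp add: PC_def)

lemma PC_add: "PC (a + b) = PC a + PC b"
  by (simp add: PC_def single_add)

lemma PC_mult: "PC (a * b) = PC a * PC b"
  by (simp add: PC_def mult_single)

lemma PC_power: "PC (a ^ n) = PC a ^ n"
  by (induct n) (simp_all add: PC_mult)

lemma PC_sum: "PC (sum f S) = (\<Sum>x\<in>S. PC (f x))"
  by (induct S rule: infinite_finite_induct) (simp_all add: PC_add)

lemma lookup_PC_zero: "Poly_Mapping.lookup (PC c) 0 = c"
  by (simp add: PC_def)

lemma PC_eq_0_iff [simp]: "PC c = 0 \<longleftrightarrow> c = 0"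
  by (metis PC_0 lookup_PC_zero)

lemma PV_neq_0 [simp]: "PV v \<noteq> 0"
  by (simp add: PV_def)

lemma PV_power: "PV v ^ n = Poly_Mapping.single (Poly_Mapping.single v n) 1"
  by (induct n) (simp_all add: PV_def mult_single single_add[symmetric] add.commute)

lemma lookup_PC_mult_PV_zero: "Poly_Mapping.lookup (PC c * PV v) 0 = 0"
  by (simp add: PC_def PV_def mult_single lookup_single when_def)

lemma vars_0 [simp]: "vars 0 = {}"
  by (simp add: vars_def)

lemma vars_PC [simp]: "vars (PC c) = {}"
  by (simp add: vars_def PC_def)

lemma vars_1 [simp]: "vars 1 = {}"
  using vars_PC[of 1] by simp

lemma vars_PV [simp]: "vars (PV v) = {v}"
  by (simp add: vars_def PV_def)

lemma vars_add: "vars (F + G) \<subseteq> vars F \<union> vars G"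
  using keys_add[of F G] by (auto simp: vars_def)

lemma vars_uminus [simp]: "vars (- F) = vars F"
  by (simp add: vars_def keys_def lookup_uminus)

lemma vars_diff: "vars (F - G) \<subseteq> vars F \<union> vars G"
  using vars_add[of F "- G"] by simp

lemma vars_mult: "vars (F * G) \<subseteq> vars F \<union> vars G"
  using keys_mult[of F G] by (force simp: vars_def keys_add_nat)

lemma vars_power: "vars (F ^ n) \<subseteq> vars F"
  by (induct n) (use vars_mult in auto)

lemma vars_sum: "vars (sum f S) \<subseteq> (\<Union>x\<in>S. vars (f x))"
  by (induct S rule: infinite_finite_induct) (use vars_add in auto)

lemma vars_prod: "vars (prod f S) \<subseteq> (\<Union>x\<in>S. vars (f x))"
  by (induct S rule: infinite_finite_induct) (use vars_mult in auto)

lemma vars_single: "vars (Poly_Mapping.single \<alpha> c) \<subseteq> Poly_Mapping.keys \<alpha>"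
  by (simp add: vars_def)

lemma keys_subset_vars: "\<alpha> \<in> Poly_Mapping.keys F \<Longrightarrow> Poly_Mapping.keys \<alpha> \<subseteq> vars F"
  by (auto simp: vars_def)

definition subst_monom :: "(var \<Rightarrow> mpoly) \<Rightarrow> (var \<Rightarrow>\<^sub>0 nat) \<Rightarrow> mpoly" where
  "subst_monom \<sigma> \<alpha> = (\<Prod>v\<in>Poly_Mapping.keys \<alpha>. \<sigma> v ^ Poly_Mapping.lookup \<alpha> v)"

lemma subst_eq_sum_subst_monom:
  "subst \<sigma> F = (\<Sum>\<alpha>\<in>Poly_Mapping.keys F. PC (Poly_Mapping.lookup F \<alpha>) * subst_monom \<sigma> \<alpha>)"
  by (simp add: subst_def subst_monom_def)

lemma subst_monom_superset:
  "finite S \<Longrightarrow> Poly_Mapping.keys \<alpha> \<subseteq> S \<Longrightarrow>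
   subst_monom \<sigma> \<alpha> = (\<Prod>v\<in>S. \<sigma> v ^ Poly_Mapping.lookup \<alpha> v)"
  unfolding subst_monom_def by (rule prod.mono_neutral_left) (auto simp: in_keys_iff)

lemma subst_monom_add: "subst_monom \<sigma> (\<alpha> + \<beta>) = subst_monom \<sigma> \<alpha> * subst_monom \<sigma> \<beta>"
proof -
  let ?S = "Poly_Mapping.keys \<alpha> \<union> Poly_Mapping.keys \<beta>"
  have "subst_monom \<sigma> (\<alpha> + \<beta>) = (\<Prod>v\<in>?S. \<sigma> v ^ Poly_Mapping.lookup (\<alpha> + \<beta>) v)"
    by (rule subst_monom_superset) (auto simp: keys_add_nat)
  also have "\<dots> = (\<Prod>v\<in>?S. \<sigma> v ^ Poly_Mapping.lookup \<alpha> v) * (\<Prod>v\<in>?S. \<sigma> v ^ Poly_Mapping.lookup \<beta> v)"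
    by (simp add: lookup_add power_add prod.distrib)
  also have "\<dots> = subst_monom \<sigma> \<alpha> * subst_monom \<sigma> \<beta>"
    by (subst (1 2) subst_monom_superset[where S = ?S]) auto
  finally show ?thesis .
qed

lemma subst_superset:
  "finite S \<Longrightarrow> Poly_Mapping.keys F \<subseteq> S \<Longrightarrow>
   subst \<sigma> F = (\<Sum>\<alpha>\<in>S. PC (Poly_Mapping.lookup F \<alpha>) * subst_monom \<sigma> \<alpha>)"
  unfolding subst_eq_sum_subst_monom by (rule sum.mono_neutral_left) (auto simp: in_keys_iff)

lemma subst_0 [simp]: "subst \<sigma> 0 = 0"
  by (simp add: subst_def)

lemma subst_add: "subst \<sigma> (F + G) = subst \<sigma> F + subst \<sigma> G"
proof -
  let ?S = "Poly_Mapping.keys F \<union> Poly_Mapping.keys G"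
  have "subst \<sigma> (F + G) = (\<Sum>\<alpha>\<in>?S. PC (Poly_Mapping.lookup (F + G) \<alpha>) * subst_monom \<sigma> \<alpha>)"
    by (rule subst_superset) (use keys_add[of F G] in auto)
  also have "\<dots> = (\<Sum>\<alpha>\<in>?S. PC (Poly_Mapping.lookup F \<alpha>) * subst_monom \<sigma> \<alpha>)
                 + (\<Sum>\<alpha>\<in>?S. PC (Poly_Mapping.lookup G \<alpha>) * subst_monom \<sigma> \<alpha>)"
    by (simp add: lookup_add PC_add distrib_right sum.distrib)
  also have "\<dots> = subst \<sigma> F + subst \<sigma> G"
    by (subst (1 2) subst_superset[where S = ?S]) auto
  finally show ?thesis .
qed

lemma subst_uminus: "subst \<sigma> (- F) = - subst \<sigma> F"
  using subst_add[of \<sigma> F "- F"] by (simp add: eq_neg_iff_add_eq_0 add.commute)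

lemma subst_diff: "subst \<sigma> (F - G) = subst \<sigma> F - subst \<sigma> G"
  using subst_add[of \<sigma> F "- G"] by (simp add: subst_uminus)

lemma subst_sum: "subst \<sigma> (sum f S) = (\<Sum>x\<in>S. subst \<sigma> (f x))"
  by (induct S rule: infinite_finite_induct) (simp_all add: subst_add)

lemma subst_single: "subst \<sigma> (Poly_Mapping.single \<alpha> c) = PC c * subst_monom \<sigma> \<alpha>"
  by (simp add: subst_eq_sum_subst_monom)

lemma subst_mult: "subst \<sigma> (F * G) = subst \<sigma> F * subst \<sigma> G"
proof -
  have "F * G = (\<Sum>\<alpha>\<in>Poly_Mapping.keys F. Poly_Mapping.single \<alpha> (Poly_Mapping.lookup F \<alpha>)) *
                (\<Sum>\<beta>\<in>Poly_Mapping.keys G. Poly_Mapping.single \<beta> (Poly_Mapping.lookup G \<beta>))"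
    by (simp only: poly_mapping_sum_single)
  also have "\<dots> = (\<Sum>\<alpha>\<in>Poly_Mapping.keys F. \<Sum>\<beta>\<in>Poly_Mapping.keys G.
       Poly_Mapping.single (\<alpha> + \<beta>) (Poly_Mapping.lookup F \<alpha> * Poly_Mapping.lookup G \<beta>))"
    by (simp add: sum_product mult_single)
  finally have "subst \<sigma> (F * G) = (\<Sum>\<alpha>\<in>Poly_Mapping.keys F. \<Sum>\<beta>\<in>Poly_Mapping.keys G.
       PC (Poly_Mapping.lookup F \<alpha>) * subst_monom \<sigma> \<alpha> * (PC (Poly_Mapping.lookup G \<beta>) * subst_monom \<sigma> \<beta>))"
    by (simp add: subst_sum subst_single subst_monom_add PC_mult mult_ac)
  also have "\<dots> = subst \<sigma> F * subst \<sigma> G"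
    by (simp add: subst_eq_sum_subst_monom sum_product)
  finally show ?thesis .
qed

lemma subst_PC [simp]: "subst \<sigma> (PC c) = PC c"
  by (simp add: PC_def subst_single subst_monom_def)

lemma subst_1 [simp]: "subst \<sigma> 1 = 1"
  using subst_PC[of \<sigma> 1] by (simp del: subst_PC)

lemma subst_power: "subst \<sigma> (F ^ n) = subst \<sigma> F ^ n"
  by (induct n) (simp_all add: subst_mult)

lemma subst_PV [simp]: "subst \<sigma> (PV v) = \<sigma> v"
  by (simp add: PV_def subst_single subst_monom_def)

lemma subst_cong: "(\<And>v. v \<in> vars F \<Longrightarrow> \<sigma> v = \<tau> v) \<Longrightarrow> subst \<sigma> F = subst \<tau> F"
  unfolding subst_def
  by (intro sum.cong refl arg_cong2[where f = "(*)"] prod.cong arg_cong2[where f = "(^)"])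
     (auto simp: vars_def)

lemma subst_PV_eq_self: "subst PV F = F"
proof -
  have "(\<Prod>v\<in>S. Poly_Mapping.single (f v) (1::complex)) = Poly_Mapping.single (sum f S) 1"
    for f :: "var \<Rightarrow> var \<Rightarrow>\<^sub>0 nat" and S
    by (induct S rule: infinite_finite_induct) (simp_all add: mult_single add.commute)
  then have "subst_monom PV \<alpha> = Poly_Mapping.single \<alpha> 1" for \<alpha>
    by (simp add: subst_monom_def PV_power poly_mapping_sum_single)
  then show ?thesis
    by (simp add: subst_eq_sum_subst_monom PC_def mult_single poly_mapping_sum_single)
qed

lemma subst_eq_self: "(\<And>v. v \<in> vars F \<Longrightarrow> \<sigma> v = PV v) \<Longrightarrow> subst \<sigma> F = F"
  using subst_cong[of F \<sigma> PV] subst_PV_eq_self by simp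

definition xi_weight :: "var \<Rightarrow> nat" where
  "xi_weight v = (case v of Z _ \<Rightarrow> 0 | Xi _ \<Rightarrow> 1)"

lemma xi_deg_superset:
  "finite S \<Longrightarrow> Poly_Mapping.keys \<alpha> \<subseteq> S \<Longrightarrow>
   xi_deg \<alpha> = (\<Sum>v\<in>S. xi_weight v * Poly_Mapping.lookup \<alpha> v)"
  unfolding xi_deg_def xi_weight_def
  by (rule sum.mono_neutral_cong_left) (auto simp: in_keys_iff split: var.splits)

lemma xi_deg_add: "xi_deg (\<alpha> + \<beta>) = xi_deg \<alpha> + xi_deg \<beta>"
  by (subst (1 2 3) xi_deg_superset[where S = "Poly_Mapping.keys \<alpha> \<union> Poly_Mapping.keys \<beta>"])
     (auto simp: keys_add_nat lookup_add distrib_left sum.distrib)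

lemma xi_homog_0 [simp]: "xi_homog d 0"
  by (simp add: xi_homog_def)

lemma xi_homog_PC: "xi_homog 0 (PC c)"
  by (simp add: xi_homog_def PC_def xi_deg_def)

lemma xi_homog_PV: "xi_homog (xi_weight v) (PV v)"
  by (simp add: xi_homog_def PV_def xi_deg_superset[of "{v}"])

lemma xi_homog_add: "xi_homog d F \<Longrightarrow> xi_homog d G \<Longrightarrow> xi_homog d (F + G)"
  using keys_add[of F G] by (auto simp: xi_homog_def)

lemma xi_homog_diff: "xi_homog d F \<Longrightarrow> xi_homog d G \<Longrightarrow> xi_homog d (F - G)"
  using xi_homog_add[of d F "- G"] by (simp add: xi_homog_def keys_def lookup_uminus)

lemma xi_homog_mult: "xi_homog a F \<Longrightarrow> xi_homog b G \<Longrightarrow> xi_homog (a + b) (F * G)"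
  using keys_mult[of F G] by (force simp: xi_homog_def xi_deg_add)

lemma xi_homog_power: "xi_homog a F \<Longrightarrow> xi_homog (n * a) (F ^ n)"
  by (induct n) (use xi_homog_PC[of 1] xi_homog_mult in auto)

lemma xi_homog_sum: "(\<And>x. x \<in> S \<Longrightarrow> xi_homog d (f x)) \<Longrightarrow> xi_homog d (sum f S)"
  by (induct S rule: infinite_finite_induct) (simp_all add: xi_homog_add)

lemma xi_homog_prod:
  "(\<And>x. x \<in> S \<Longrightarrow> xi_homog (d x) (f x)) \<Longrightarrow> xi_homog (sum d S) (prod f S)"
  by (induct S rule: infinite_finite_induct) (use xi_homog_PC[of 1] xi_homog_mult in auto)

lemma xi_homog_subst:
  assumes "xi_homog d F" and "\<And>v. v \<in> vars F \<Longrightarrow> xi_homog (xi_weight v) (\<sigma> v)"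
  shows "xi_homog d (subst \<sigma> F)"
  unfolding subst_eq_sum_subst_monom
proof (rule xi_homog_sum)
  fix \<alpha> assume \<alpha>: "\<alpha> \<in> Poly_Mapping.keys F"
  have "xi_homog (\<Sum>v\<in>Poly_Mapping.keys \<alpha>. Poly_Mapping.lookup \<alpha> v * xi_weight v) (subst_monom \<sigma> \<alpha>)"
    unfolding subst_monom_def
    by (intro xi_homog_prod xi_homog_power assms(2)) (use keys_subset_vars[OF \<alpha>] in auto)
  moreover have "(\<Sum>v\<in>Poly_Mapping.keys \<alpha>. Poly_Mapping.lookup \<alpha> v * xi_weight v) = d"
    using assms(1) \<alpha> by (simp add: xi_homog_def xi_deg_superset[OF finite_keys order_refl] mult.commute)
  ultimately show "xi_homog d (PC (Poly_Mapping.lookup F \<alpha>) * subst_monom \<sigma> \<alpha>)"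
    using xi_homog_mult[OF xi_homog_PC] by fastforce
qed


section \<open>Roots of unity\<close>

lemma zeta_power: "zeta p ^ d = cis (2 * pi * real d / real p)"
  by (simp add: zeta_def DeMoivre mult.commute)

lemma zeta_power_self: "1 \<le> p \<Longrightarrow> zeta p ^ p = 1"
  by (simp add: zeta_power)

lemma mu_power_self: "1 \<le> p \<Longrightarrow> c \<in> mu p \<Longrightarrow> c ^ p = 1"
  by (auto simp: mu_def power_mult[symmetric] mult.commute[of _ p] power_mult zeta_power_self)

lemma zeta_power_in_mu: "j < p \<Longrightarrow> zeta p ^ j \<in> mu p"
  by (auto simp: mu_def)

lemma zeta_power_eq_1_iff:
  assumes "1 \<le> p"
  shows "zeta p ^ d = 1 \<longleftrightarrow> p dvd d"
proof
  assume "zeta p ^ d = 1"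
  then have "cos (2 * pi * real d / real p) = 1"
    unfolding zeta_power by (metis cis.sel(1) one_complex.sel(1))
  then obtain n :: int where "2 * pi * real d / real p = real_of_int n * (2 * pi)"
    using cos_one_2pi_int by (metis mult.assoc)
  then have "real d = real_of_int n * real p"
    using assms by (simp add: field_simps)
  then have "int d = n * int p"
    by (metis of_int_eq_iff of_int_mult of_int_of_nat_eq)
  then show "p dvd d"
    by (metis dvd_triv_right int_dvd_int_iff)
next
  assume "p dvd d"
  then show "zeta p ^ d = 1"
    using zeta_power_self[OF assms] by (auto simp: power_mult)
qed

lemma sum_powers_zeta_power:
  assumes "1 \<le> p"
  shows "(\<Sum>j<p. (zeta p ^ d) ^ j) = (if p dvd d then of_nat p else 0)"
proof -
  have "(zeta p ^ d) ^ p = 1"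
    by (metis zeta_power_self[OF assms] mult.commute power_mult power_one)
  then show ?thesis
    using zeta_power_eq_1_iff[OF assms] by (simp add: sum_gp_strict)
qed

lemma dvd_self_diff_add_iff:
  fixes r s p :: nat
  assumes "r < p" "s < p"
  shows "p dvd (p - s + r) \<longleftrightarrow> r = s"
proof
  assume dvd: "p dvd (p - s + r)"
  show "r = s"
  proof (rule ccontr)
    assume "r \<noteq> s"
    then consider "r < s" | "s < r"
      by linarith
    then show False
    proof cases
      case 1
      then show False
        using dvd nat_dvd_not_less[of "p - s + r" p] assms by linarith
    next
      case 2
      then have "p dvd (r - s)"
        using dvd assms by (metis add.commute add_diff_assoc less_imp_le dvd_add_right_iff dvd_refl)
      then show False
        using 2 nat_dvd_not_less[of "r - s" p] assms by linarith
    qed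
  qed
qed (use assms in simp)

text \<open>Orthogonality of the characters of \<open>\<mu>\<^sub>p\<close>: weighting by \<open>c\<^sup>p\<^sup>-\<^sup>s\<close> and summing over \<open>c \<in> \<mu>\<^sub>p\<close>
  extracts the coefficient of \<open>c\<^sup>s\<close>.\<close>

lemma coeff_eq_0_if_vanishing_on_mu:
  fixes B :: "nat \<Rightarrow> mpoly"
  assumes p: "1 \<le> p" and vanish: "\<And>c. c \<in> mu p \<Longrightarrow> (\<Sum>r<p. PC (c ^ r) * B r) = 0"
    and s: "s < p"
  shows "B s = 0"
proof -
  let ?z = "zeta p"
  have "0 = (\<Sum>j<p. PC (?z ^ (j * (p - s))) * (\<Sum>r<p. PC ((?z ^ j) ^ r) * B r))"
    using vanish zeta_power_in_mu by simp
  also have "\<dots> = (\<Sum>j<p. \<Sum>r<p. PC ((?z ^ (p - s + r)) ^ j) * B r)"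
  proof -
    have "?z ^ (j * (p - s)) * (?z ^ j) ^ r = (?z ^ (p - s + r)) ^ j" for j r
      by (simp add: power_mult[symmetric] power_add[symmetric] add_mult_distrib2 mult.commute add.commute)
    then show ?thesis
      by (simp add: sum_distrib_left mult.assoc[symmetric] PC_mult[symmetric])
  qed
  also have "\<dots> = (\<Sum>r<p. PC (\<Sum>j<p. (?z ^ (p - s + r)) ^ j) * B r)"
    by (subst sum.swap) (simp add: PC_sum sum_distrib_right)
  also have "\<dots> = (\<Sum>r<p. if r = s then PC (of_nat p) * B r else 0)"
    by (intro sum.cong refl) (simp add: sum_powers_zeta_power[OF p] dvd_self_diff_add_iff s)
  also have "\<dots> = PC (of_nat p) * B s"
    using s by simp
  finally show ?thesis
    using p by simp
qed

section \<open>The ideal \<open>(M\<^sub>1, \<dots>, M\<^sub>k)\<close>\<close>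

lemma in_ideal_0 [simp]: "in_ideal m p W k 0"
  unfolding in_ideal_def by (rule exI[of _ "\<lambda>_. 0"]) simp

lemma in_ideal_no_gens_iff: "in_ideal m p W 0 X \<longleftrightarrow> X = 0"
  unfolding in_ideal_def by (auto intro: exI[of _ "\<lambda>_. 0"])

lemma in_ideal_add:
  assumes "in_ideal m p W k X" "in_ideal m p W k Y"
  shows "in_ideal m p W k (X + Y)"
proof -
  obtain c d where c: "\<forall>i. vars (c i) \<subseteq> W" "X = (\<Sum>i = 1..k. c i * Mgen m p i)"
    and d: "\<forall>i. vars (d i) \<subseteq> W" "Y = (\<Sum>i = 1..k. d i * Mgen m p i)"
    using assms by (auto simp: in_ideal_def)
  have "vars (c i + d i) \<subseteq> W" for i
    using vars_add[of "c i" "d i"] c d by blast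
  then show ?thesis
    unfolding in_ideal_def
    by (intro exI[of _ "\<lambda>i. c i + d i"]) (simp add: c d distrib_right sum.distrib)
qed

lemma in_ideal_mult:
  assumes "vars H \<subseteq> W" "in_ideal m p W k X"
  shows "in_ideal m p W k (H * X)"
proof -
  obtain c where c: "\<forall>i. vars (c i) \<subseteq> W" "X = (\<Sum>i = 1..k. c i * Mgen m p i)"
    using assms by (auto simp: in_ideal_def)
  have "vars (H * c i) \<subseteq> W" for i
    using vars_mult[of H "c i"] c assms(1) by blast
  then show ?thesis
    unfolding in_ideal_def
    by (intro exI[of _ "\<lambda>i. H * c i"]) (simp add: c sum_distrib_left mult.assoc)
qed

lemma in_ideal_sum: "(\<And>x. x \<in> S \<Longrightarrow> in_ideal m p W k (f x)) \<Longrightarrow> in_ideal m p W k (sum f S)"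
  by (induct S rule: infinite_finite_induct) (simp_all add: in_ideal_add)

lemma in_ideal_Suc: "in_ideal m p W k X \<Longrightarrow> in_ideal m p W (Suc k) X"
  unfolding in_ideal_def
proof (elim exE conjE)
  fix c assume "\<forall>i. vars (c i) \<subseteq> W" "X = (\<Sum>i = 1..k. c i * Mgen m p i)"
  then show "\<exists>c. (\<forall>i. vars (c i) \<subseteq> W) \<and> X = (\<Sum>i = 1..Suc k. c i * Mgen m p i)"
    by (intro exI[of _ "c(Suc k := 0)"]) (auto intro: sum.cong)
qed

lemma in_ideal_Mgen: "1 \<le> i \<Longrightarrow> i \<le> k \<Longrightarrow> in_ideal m p W k (Mgen m p i)"
  unfolding in_ideal_def
  by (intro exI[of _ "\<lambda>j. if j = i then 1 else 0"]) (simp add: if_distrib[of "\<lambda>x. x * _"] cong: if_cong)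

section \<open>Division by \<open>x\<^sup>p - y\<^sup>p\<close>\<close>

definition reduced_mod_pow_diff :: "nat \<Rightarrow> var set \<Rightarrow> var \<Rightarrow> var \<Rightarrow> mpoly \<Rightarrow> bool" where
  "reduced_mod_pow_diff p W x y X \<longleftrightarrow>
     (\<exists>Xs Q. (\<forall>r. vars (Xs r) \<subseteq> W \<and> x \<notin> vars (Xs r)) \<and> vars Q \<subseteq> W \<and>
        X = (\<Sum>r<p. Xs r * PV x ^ r) + (PV x ^ p - PV y ^ p) * Q)"

lemma reduced_mod_pow_diff_0: "reduced_mod_pow_diff p W x y 0"
  unfolding reduced_mod_pow_diff_def by (intro exI[of _ "\<lambda>_. 0"] exI[of _ 0]) simp

lemma reduced_mod_pow_diff_add:
  assumes "reduced_mod_pow_diff p W x y X" "reduced_mod_pow_diff p W x y Y"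
  shows "reduced_mod_pow_diff p W x y (X + Y)"
proof -
  obtain Xs Q Ys R where
      X: "\<forall>r. vars (Xs r) \<subseteq> W \<and> x \<notin> vars (Xs r)" "vars Q \<subseteq> W"
         "X = (\<Sum>r<p. Xs r * PV x ^ r) + (PV x ^ p - PV y ^ p) * Q"
    and Y: "\<forall>r. vars (Ys r) \<subseteq> W \<and> x \<notin> vars (Ys r)" "vars R \<subseteq> W"
         "Y = (\<Sum>r<p. Ys r * PV x ^ r) + (PV x ^ p - PV y ^ p) * R"
    using assms unfolding reduced_mod_pow_diff_def by blast
  have "vars (Xs r + Ys r) \<subseteq> W \<and> x \<notin> vars (Xs r + Ys r)" for r
    using X Y vars_add[of "Xs r" "Ys r"] by blast
  moreover have "vars (Q + R) \<subseteq> W"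
    using X Y vars_add[of Q R] by blast
  moreover have "X + Y = (\<Sum>r<p. (Xs r + Ys r) * PV x ^ r) + (PV x ^ p - PV y ^ p) * (Q + R)"
    by (simp add: X(3) Y(3) distrib_right distrib_left sum.distrib algebra_simps)
  ultimately show ?thesis
    unfolding reduced_mod_pow_diff_def by (intro exI[of _ "\<lambda>r. Xs r + Ys r"] exI[of _ "Q + R"]) blast
qed

lemma reduced_mod_pow_diff_sum:
  "(\<And>a. a \<in> S \<Longrightarrow> reduced_mod_pow_diff p W x y (f a)) \<Longrightarrow> reduced_mod_pow_diff p W x y (sum f S)"
  by (induct S rule: infinite_finite_induct)
     (simp_all add: reduced_mod_pow_diff_0 reduced_mod_pow_diff_add)

lemma reduced_mod_pow_diff_monom:
  assumes p: "1 \<le> p" and xy: "x \<noteq> y" "x \<in> W" "y \<in> W"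
    and A: "vars A \<subseteq> W" "x \<notin> vars A"
  shows "reduced_mod_pow_diff p W x y (A * PV x ^ e)"
proof -
  define q r where "q = e div p" and "r = e mod p"
  have r: "r < p"
    using p by (simp add: r_def)
  define a b where "a = PV x ^ p" and "b = PV y ^ p"
  define S where "S = (\<Sum>i<q. b ^ (q - Suc i) * a ^ i)"
  have "vars a \<subseteq> W" "vars b \<subseteq> W"
    using xy vars_power[of "PV x" p] vars_power[of "PV y" p] by (auto simp: a_def b_def)
  then have summand: "vars (b ^ (q - Suc i) * a ^ i) \<subseteq> W" for i
    using vars_mult[of "b ^ (q - Suc i)" "a ^ i"] vars_power[of b] vars_power[of a] by blast
  have vars_S: "vars S \<subseteq> W"
    unfolding S_def by (intro order_trans[OF vars_sum] UN_least summand)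
  have "e = r + p * q"
    by (simp add: q_def r_def)
  then have "A * PV x ^ e = A * PV x ^ r * a ^ q"
    by (simp add: power_add power_mult a_def)
  also have "\<dots> = (A * b ^ q) * PV x ^ r + (a - b) * (A * PV x ^ r * S)"
  proof -
    have aq: "a ^ q = b ^ q + (a - b) * S"
      using power_diff_sumr2[of a q b] unfolding S_def by (metis diff_eq_eq add.commute)
    show ?thesis
      by (simp add: aq algebra_simps)
  qed
  finally have expand: "A * PV x ^ e = (A * b ^ q) * PV x ^ r + (a - b) * (A * PV x ^ r * S)" .
  have "vars (A * b ^ q) \<subseteq> vars A \<union> {y}"
    using vars_mult[of A "b ^ q"] vars_power[of b q] vars_power[of "PV y" p] by (auto simp: b_def)
  then have "\<forall>t. vars (if t = r then A * b ^ q else 0) \<subseteq> W \<and> x \<notin> vars (if t = r then A * b ^ q else 0)"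
    using A xy by auto
  moreover have "vars (A * PV x ^ r * S) \<subseteq> W"
    using vars_mult[of "A * PV x ^ r" S] vars_mult[of A "PV x ^ r"] vars_power[of "PV x" r] A xy vars_S
    by fastforce
  moreover have "(\<Sum>t<p. (if t = r then A * b ^ q else 0) * PV x ^ t) = A * b ^ q * PV x ^ r"
    using r by (simp add: if_distrib[of "\<lambda>u. u * _"] cong: if_cong)
  ultimately show ?thesis
    unfolding reduced_mod_pow_diff_def using expand
    by (intro exI[of _ "\<lambda>t. if t = r then A * b ^ q else 0"] exI[of _ "A * PV x ^ r * S"])
       (simp add: a_def b_def)
qed

lemma reduced_mod_pow_diff:
  assumes p: "1 \<le> p" and xy: "x \<noteq> y" "x \<in> W" "y \<in> W" and X: "vars X \<subseteq> W"
  shows "reduced_mod_pow_diff p W x y X"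
proof -
  have "reduced_mod_pow_diff p W x y (Poly_Mapping.single \<alpha> (Poly_Mapping.lookup X \<alpha>))"
    if \<alpha>: "\<alpha> \<in> Poly_Mapping.keys X" for \<alpha>
  proof -
    define \<alpha>' where "\<alpha>' = Poly_Mapping.update x 0 \<alpha>"
    have \<alpha>_split: "\<alpha> = \<alpha>' + Poly_Mapping.single x (Poly_Mapping.lookup \<alpha> x)"
      by (rule poly_mapping_eqI) (simp add: \<alpha>'_def lookup_add lookup_update lookup_single when_def)
    let ?A = "Poly_Mapping.single \<alpha>' (Poly_Mapping.lookup X \<alpha>)"
    have "Poly_Mapping.single \<alpha> (Poly_Mapping.lookup X \<alpha>) = ?A * PV x ^ Poly_Mapping.lookup \<alpha> x"
      by (subst (1) \<alpha>_split) (simp add: PV_power mult_single)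
    moreover have "Poly_Mapping.keys \<alpha>' \<subseteq> Poly_Mapping.keys \<alpha> - {x}"
      by (auto simp: \<alpha>'_def keys_update)
    then have "vars ?A \<subseteq> W" "x \<notin> vars ?A"
      using vars_single[of \<alpha>' "Poly_Mapping.lookup X \<alpha>"] keys_subset_vars[OF \<alpha>] X by auto
    ultimately show ?thesis
      using reduced_mod_pow_diff_monom[OF p xy] by simp
  qed
  then have "reduced_mod_pow_diff p W x y
      (\<Sum>\<alpha>\<in>Poly_Mapping.keys X. Poly_Mapping.single \<alpha> (Poly_Mapping.lookup X \<alpha>))"
    by (rule reduced_mod_pow_diff_sum)
  then show ?thesis
    by (simp only: poly_mapping_sum_single)
qed


section \<open>The substitutions \<open>\<psi>\<^sub>k(\<chi>)\<close>\<close>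

abbreviation mu_tuples :: "nat \<Rightarrow> nat \<Rightarrow> (nat \<Rightarrow> complex) set" where
  "mu_tuples p k \<equiv> PiE {1..k} (\<lambda>_. mu p)"

definition psi_subst :: "nat \<Rightarrow> nat \<Rightarrow> (nat \<Rightarrow> complex) \<Rightarrow> var \<Rightarrow> mpoly" where
  "psi_subst m k \<chi> v = (case v of
        Xi i \<Rightarrow> (if 1 \<le> i \<and> i \<le> k then PC (\<chi> i) * PV (Xi m) else PV v)
      | Z j \<Rightarrow> PV v)"

lemma psi_eq_subst: "psi m k \<chi> F = subst (psi_subst m k \<chi>) F"
  by (simp add: psi_def psi_subst_def[abs_def])

lemma psi_0 [simp]: "psi m k \<chi> 0 = 0"
  by (simp add: psi_eq_subst)

lemma psi_add: "psi m k \<chi> (F + G) = psi m k \<chi> F + psi m k \<chi> G"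
  by (simp add: psi_eq_subst subst_add)

lemma psi_diff: "psi m k \<chi> (F - G) = psi m k \<chi> F - psi m k \<chi> G"
  by (simp add: psi_eq_subst subst_diff)

lemma psi_mult: "psi m k \<chi> (F * G) = psi m k \<chi> F * psi m k \<chi> G"
  by (simp add: psi_eq_subst subst_mult)

lemma psi_power: "psi m k \<chi> (F ^ n) = psi m k \<chi> F ^ n"
  by (simp add: psi_eq_subst subst_power)

lemma psi_sum: "psi m k \<chi> (sum f S) = (\<Sum>x\<in>S. psi m k \<chi> (f x))"
  by (simp add: psi_eq_subst subst_sum)

lemma psi_PV: "psi m k \<chi> (PV v) = psi_subst m k \<chi> v"
  by (simp add: psi_eq_subst)

lemmas psi_simps = psi_add psi_diff psi_mult psi_power psi_sum psi_PV

lemma psi_0_eq_self: "psi m 0 \<chi> F = F"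
  by (simp add: psi_eq_subst subst_eq_self psi_subst_def split: var.splits)

lemma psi_Mgen_eq_0:
  assumes p: "1 \<le> p" and "k < m" "1 \<le> i" "i \<le> k" and \<chi>: "\<chi> \<in> mu_tuples p k"
  shows "psi m k \<chi> (Mgen m p i) = 0"
proof -
  have "\<chi> i ^ p = 1"
    using mu_power_self[OF p] PiE_mem[OF \<chi>, of i] assms by auto
  then show ?thesis
    using assms
    by (simp add: Mgen_def psi_simps psi_subst_def power_mult_distrib PC_power[symmetric])
qed

lemma psi_eq_0_if_in_ideal:
  assumes "1 \<le> p" "k < m" "\<chi> \<in> mu_tuples p k" and "in_ideal m p W k X"
  shows "psi m k \<chi> X = 0"
proof -
  obtain c where "X = (\<Sum>i = 1..k. c i * Mgen m p i)"
    using assms(4) by (auto simp: in_ideal_def)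
  then show ?thesis
    using psi_Mgen_eq_0[OF assms(1-2) _ _ assms(3)] by (simp add: psi_simps)
qed

text \<open>Substituting \<open>0\<close> for every variable except \<open>\<xi>\<^sub>i\<close> sends \<open>\<psi>\<^sub>i\<^sub>-\<^sub>1(\<chi>)(M\<^sub>i)\<close> to \<open>\<xi>\<^sub>i\<^sup>p\<close>.\<close>

lemma psi_Mgen_neq_0:
  assumes p: "1 \<le> p" and "1 \<le> i" "i \<le> m"
  shows "psi m (i - 1) \<chi> (Mgen m p i) \<noteq> 0"
proof
  assume psi_0: "psi m (i - 1) \<chi> (Mgen m p i) = 0"
  define \<tau> where "\<tau> v = (if v = Xi i then PV v else 0)" for v
  have "(0::mpoly) ^ p = 0" "\<not> i \<le> i - 1"
    using assms by simp_all
  then have "subst \<tau> (psi m (i - 1) \<chi> (Mgen m p i)) = PV (Xi i) ^ p"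
    using assms
    by (cases "i < m")
       (simp_all add: psi_eq_subst Mgen_def subst_diff subst_power subst_sum subst_mult
          psi_subst_def \<tau>_def)
  then show False
    using psi_0 by simp
qed

lemma xi_homog_psi: "xi_homog d F \<Longrightarrow> xi_homog d (psi m k \<chi> F)"
  unfolding psi_eq_subst
proof (rule xi_homog_subst)
  fix v
  show "xi_homog (xi_weight v) (psi_subst m k \<chi> v)"
    using xi_homog_PV[of v] xi_homog_mult[OF xi_homog_PC[of "\<chi> _"] xi_homog_PV[of "Xi m"]]
    by (cases v) (auto simp: psi_subst_def xi_weight_def)
qed

lemma xi_homog_Mgen: "xi_homog p (Mgen m p i)"
proof -
  have "xi_homog 1 (PV (Xi j))" for j
    using xi_homog_PV[of "Xi j"] by (simp add: xi_weight_def)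
  moreover have "xi_homog 1 (PV (Z j) * PV (Xi j))" for j
    using xi_homog_mult[OF xi_homog_PV[of "Z j"] xi_homog_PV[of "Xi j"]] by (simp add: xi_weight_def)
  then have "xi_homog 1 (\<Sum>j = 1..m. PV (Z j) * PV (Xi j))"
    by (rule xi_homog_sum)
  ultimately show ?thesis
    unfolding Mgen_def using xi_homog_power[of 1 _ p] by (simp add: xi_homog_diff)
qed

lemma vars_Rpoly: "vars (Rpoly m p) \<subseteq> {Z j | j. 1 \<le> j \<and> j \<le> m}"
proof -
  have "vars (1 - (\<Sum>j = 1..m. PC (zeta p ^ i j) * PV (Z j))) \<subseteq> {Z j | j. 1 \<le> j \<and> j \<le> m}" for i
  proof -
    have "vars (\<Sum>j = 1..m. PC (zeta p ^ i j) * PV (Z j))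
        \<subseteq> (\<Union>j\<in>{1..m}. vars (PC (zeta p ^ i j) * PV (Z j)))"
      by (rule vars_sum)
    also have "\<dots> \<subseteq> {Z j | j. 1 \<le> j \<and> j \<le> m}"
      using vars_mult[of "PC _" "PV _"] by fastforce
    finally show ?thesis
      using vars_diff[of 1] by fastforce
  qed
  then show ?thesis
    unfolding Rpoly_def by (intro order_trans[OF vars_prod] UN_least) blast
qed

lemma vars_Den: "vars (Den m p) \<subseteq> {Z j | j. 1 \<le> j \<and> j \<le> m}"
proof -
  have "vars (\<Prod>j = 1..m. PV (Z j)) \<subseteq> {Z j | j. 1 \<le> j \<and> j \<le> m}"
    using vars_prod[of "\<lambda>j. PV (Z j)" "{1..m}"] by auto
  then show ?thesis
    unfolding Den_def using vars_mult vars_Rpoly by blast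
qed

lemma Den_neq_0: "Den m p \<noteq> 0"
proof -
  have "Poly_Mapping.lookup (1 - (\<Sum>j = 1..m. PC (zeta p ^ i j) * PV (Z j))) 0 = 1" for i
    by (simp add: lookup_minus lookup_sum lookup_PC_mult_PV_zero)
  then have "1 - (\<Sum>j = 1..m. PC (zeta p ^ i j) * PV (Z j)) \<noteq> 0" for i
    by (metis lookup_zero zero_neq_one)
  then have "Rpoly m p \<noteq> 0"
    unfolding Rpoly_def by (subst prod_zero_iff) (auto simp: finite_PiE)
  then show ?thesis
    unfolding Den_def by (simp add: prod_zero_iff)
qed

lemma psi_Den: "psi m k \<chi> (Den m p) = Den m p"
  unfolding psi_eq_subst
  by (rule subst_eq_self) (use vars_Den in \<open>force simp: psi_subst_def\<close>)

lemma Xi_top_in_Vk: "Xi m \<in> Vk m k"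
  by (simp add: Vk_def)

lemma Xi_in_Vk: "1 \<le> i \<Longrightarrow> i \<le> k \<Longrightarrow> Xi i \<in> Vk m k"
  by (auto simp: Vk_def)

lemma vars_Den_subset_Vk: "vars (Den m p) \<subseteq> Vk m k"
  using vars_Den[of m p] by (auto simp: Vk_def)

lemma Vk_mono: "k \<le> k' \<Longrightarrow> Vk m k \<subseteq> Vk m k'"
  by (auto simp: Vk_def)

section \<open>The ideal \<open>(M\<^sub>1, \<dots>, M\<^sub>k)\<close> as a common kernel\<close>

lemma psi_remainder_coeff_eq_0:
  assumes p: "1 \<le> p" and k: "Suc k < m"
    and Xs: "\<And>t. Xi (Suc k) \<notin> vars (Xs t)"
    and vanish: "\<forall>\<chi>\<in>mu_tuples p (Suc k). psi m (Suc k) \<chi>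
        ((\<Sum>t<p. Xs t * PV (Xi (Suc k)) ^ t) + (PV (Xi (Suc k)) ^ p - PV (Xi m) ^ p) * Q) = 0"
    and \<chi>': "\<chi>' \<in> mu_tuples p k" and r: "r < p"
  shows "psi m k \<chi>' (Xs r) = 0"
proof -
  define B where "B t = psi m k \<chi>' (Xs t) * PV (Xi m) ^ t" for t
  have "(\<Sum>t<p. PC (c ^ t) * B t) = 0" if c: "c \<in> mu p" for c
  proof -
    define \<chi> where "\<chi> = \<chi>'(Suc k := c)"
    have \<chi>: "\<chi> \<in> mu_tuples p (Suc k)"
      using \<chi>' c by (auto simp: \<chi>_def PiE_def extensional_def Pi_def)
    have "psi m (Suc k) \<chi> (Xs t) = psi m k \<chi>' (Xs t)" for t
      unfolding psi_eq_subst
    proof (rule subst_cong)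
      fix v assume "v \<in> vars (Xs t)"
      then have "v \<noteq> Xi (Suc k)"
        using Xs by auto
      then show "psi_subst m (Suc k) \<chi> v = psi_subst m k \<chi>' v"
        by (cases v) (auto simp: psi_subst_def \<chi>_def le_Suc_eq)
    qed
    moreover have "psi_subst m (Suc k) \<chi> (Xi (Suc k)) = PC c * PV (Xi m)"
      "psi_subst m (Suc k) \<chi> (Xi m) = PV (Xi m)"
      using k by (simp_all add: psi_subst_def \<chi>_def)
    ultimately have "0 = (\<Sum>t<p. psi m k \<chi>' (Xs t) * (PC c * PV (Xi m)) ^ t)
        + ((PC c * PV (Xi m)) ^ p - PV (Xi m) ^ p) * psi m (Suc k) \<chi> Q"
      using bspec[OF vanish \<chi>] by (simp add: psi_simps)
    also have "\<dots> = (\<Sum>t<p. PC (c ^ t) * B t)"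
      using mu_power_self[OF p c] by (simp add: B_def power_mult_distrib PC_power[symmetric] mult_ac)
    finally show ?thesis
      by simp
  qed
  then have "B r = 0"
    using coeff_eq_0_if_vanishing_on_mu[OF p _ r] by blast
  then show ?thesis
    by (simp add: B_def)
qed

theorem in_ideal_iff_psi_eq_0:
  assumes p: "1 \<le> p" and "k < m" "Vk m k \<subseteq> W" "vars X \<subseteq> W"
  shows "in_ideal m p W k X \<longleftrightarrow> (\<forall>\<chi>\<in>mu_tuples p k. psi m k \<chi> X = 0)"
proof
  show "in_ideal m p W k X \<Longrightarrow> \<forall>\<chi>\<in>mu_tuples p k. psi m k \<chi> X = 0"
    using psi_eq_0_if_in_ideal[OF p \<open>k < m\<close>] by blast
next
  show "\<forall>\<chi>\<in>mu_tuples p k. psi m k \<chi> X = 0 \<Longrightarrow> in_ideal m p W k X"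
    using assms(2-4)
  proof (induct k arbitrary: X)
    case 0
    then show ?case
      using psi_0_eq_self[of m _ X] by (auto simp: in_ideal_no_gens_iff)
  next
    case (Suc k)
    let ?x = "Xi (Suc k)" and ?y = "Xi m"
    have xy: "?x \<noteq> ?y" "?x \<in> W" "?y \<in> W"
      using Suc.prems Xi_top_in_Vk Xi_in_Vk[of "Suc k" "Suc k" m] by auto
    obtain Xs Q where Xs: "\<forall>r. vars (Xs r) \<subseteq> W \<and> ?x \<notin> vars (Xs r)" and Q: "vars Q \<subseteq> W"
      and X: "X = (\<Sum>r<p. Xs r * PV ?x ^ r) + (PV ?x ^ p - PV ?y ^ p) * Q"
      using reduced_mod_pow_diff[OF p xy Suc.prems(4)] unfolding reduced_mod_pow_diff_def by blast
    have coeff: "in_ideal m p W k (Xs r)" if "r < p" for r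
    proof (rule Suc.hyps)
      show "\<forall>\<chi>\<in>mu_tuples p k. psi m k \<chi> (Xs r) = 0"
        using psi_remainder_coeff_eq_0[OF p \<open>Suc k < m\<close>, of Xs Q] Xs Suc.prems(1) X \<open>r < p\<close> by blast
      show "Vk m k \<subseteq> W"
        using Suc.prems(3) Vk_mono[of k "Suc k" m] by auto
    qed (use Suc.prems Xs in auto)
    have "in_ideal m p W (Suc k) (PV ?x ^ r * Xs r)" if "r < p" for r
      using vars_power[of "PV ?x" r] xy by (intro in_ideal_mult in_ideal_Suc coeff that) auto
    then have "in_ideal m p W (Suc k) (\<Sum>r<p. Xs r * PV ?x ^ r)"
      by (intro in_ideal_sum) (simp add: mult.commute)
    moreover have "in_ideal m p W (Suc k) (Q * Mgen m p (Suc k))"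
      by (rule in_ideal_mult[OF Q in_ideal_Mgen]) auto
    ultimately show ?case
      using Suc.prems(2) by (simp add: X Mgen_def in_ideal_add mult.commute)
  qed
qed

lemma loc_eq_no_gens_iff:
  "loc_eq m p W 0 (F, n) (G, n') \<longleftrightarrow> Den m p ^ n' * F = Den m p ^ n * G"
  by (simp add: loc_eq_def in_ideal_no_gens_iff Den_neq_0)

lemma psi_eq_if_loc_eq:
  assumes "1 \<le> p" "k < m" "\<chi> \<in> mu_tuples p k" and "loc_eq m p W k (F, n) (G, n')"
  shows "Den m p ^ n' * psi m k \<chi> F = Den m p ^ n * psi m k \<chi> G"
proof -
  obtain N where "in_ideal m p W k (Den m p ^ N * (Den m p ^ n' * F - Den m p ^ n * G))"
    using assms(4) by (auto simp: loc_eq_def)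
  then have "psi m k \<chi> (Den m p ^ N * (Den m p ^ n' * F - Den m p ^ n * G)) = 0"
    by (rule psi_eq_0_if_in_ideal[OF assms(1-3)])
  then have "Den m p ^ N * (Den m p ^ n' * psi m k \<chi> F - Den m p ^ n * psi m k \<chi> G) = 0"
    by (simp add: psi_simps psi_Den)
  then show ?thesis
    by (simp add: Den_neq_0)
qed

lemma loc_eq_if_psi_eq:
  assumes "1 \<le> p" "k < m" "Vk m k \<subseteq> W" "vars F \<subseteq> W" "vars G \<subseteq> W"
    and "\<forall>\<chi>\<in>mu_tuples p k. Den m p ^ n' * psi m k \<chi> F = Den m p ^ n * psi m k \<chi> G"
  shows "loc_eq m p W k (F, n) (G, n')"
proof -
  let ?X = "Den m p ^ n' * F - Den m p ^ n * G"
  have "vars (Den m p ^ j) \<subseteq> W" for j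
    using vars_power vars_Den_subset_Vk assms(3) by blast
  then have "vars ?X \<subseteq> W"
    using assms(4,5) vars_diff vars_mult by (meson Un_least order_trans)
  moreover have "\<forall>\<chi>\<in>mu_tuples p k. psi m k \<chi> ?X = 0"
    using assms(6) by (simp add: psi_simps psi_Den)
  ultimately have "in_ideal m p W k ?X"
    using in_ideal_iff_psi_eq_0[OF assms(1-3)] by blast
  then show ?thesis
    unfolding loc_eq_def by (intro exI[of _ 0]) simp
qed

lemma loc_eq_iff_psi_loc_eq:
  assumes "1 \<le> p" "k < m" "vars F \<subseteq> Vk m k" "vars G \<subseteq> Vk m k"
  shows "loc_eq m p (Vk m k) k (F, n) (G, n') \<longleftrightarrow>
    (\<forall>\<chi>\<in>mu_tuples p k. loc_eq m p W 0 (psi m k \<chi> F, n) (psi m k \<chi> G, n'))"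
  unfolding loc_eq_no_gens_iff
  using psi_eq_if_loc_eq[OF assms(1,2)] loc_eq_if_psi_eq[OF assms(1,2) order_refl assms(3,4)]
  by blast

lemma loc_eq_0_cancel_left:
  assumes "1 \<le> p" "k < m" "Vk m k \<subseteq> W" "vars F \<subseteq> W"
    and H: "\<forall>\<chi>\<in>mu_tuples p k. psi m k \<chi> H \<noteq> 0"
    and HF: "loc_eq m p W k (H * F, n) (0, 0)"
  shows "loc_eq m p W k (F, n) (0, 0)"
proof (rule loc_eq_if_psi_eq[OF assms(1-4)])
  show "\<forall>\<chi>\<in>mu_tuples p k. Den m p ^ 0 * psi m k \<chi> F = Den m p ^ n * psi m k \<chi> 0"
  proof
    fix \<chi> assume \<chi>: "\<chi> \<in> mu_tuples p k"
    have "Den m p ^ 0 * psi m k \<chi> (H * F) = Den m p ^ n * psi m k \<chi> 0"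
      by (rule psi_eq_if_loc_eq[OF assms(1,2) \<chi> HF])
    then show "Den m p ^ 0 * psi m k \<chi> F = Den m p ^ n * psi m k \<chi> 0"
      using H \<chi> by (simp add: psi_mult)
  qed
qed simp

lemma Mgen_cancel:
  assumes "1 \<le> p" "1 \<le> i" "i \<le> m" "Vk m (i - 1) \<subseteq> W" "vars F \<subseteq> W"
    and "loc_eq m p W (i - 1) (Mgen m p i * F, n) (0, 0)"
  shows "loc_eq m p W (i - 1) (F, n) (0, 0)"
proof (rule loc_eq_0_cancel_left[OF assms(1) _ assms(4,5) _ assms(6)])
  show "i - 1 < m"
    using assms(2,3) by simp
qed (use psi_Mgen_neq_0[OF assms(1-3)] in blast)

lemma quotient_neq_0: "1 \<le> p \<Longrightarrow> \<not> loc_eq m p W m (1, 0) (0, 0)"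
proof
  assume "1 \<le> p" "loc_eq m p W m (1, 0) (0, 0)"
  then obtain N c where c: "Den m p ^ N = (\<Sum>i = 1..m. c i * Mgen m p i)"
    by (auto simp: loc_eq_def in_ideal_def)
  define \<tau> where "\<tau> v = (case v of Z _ \<Rightarrow> PV v | Xi _ \<Rightarrow> 0)" for v
  have "(0::mpoly) ^ p = 0"
    using \<open>1 \<le> p\<close> by simp
  then have "subst \<tau> (Mgen m p i) = 0" for i
    by (simp add: Mgen_def subst_diff subst_power subst_sum subst_mult \<tau>_def)
  moreover have "subst \<tau> (Den m p ^ N) = Den m p ^ N"
    unfolding subst_power by (rule arg_cong[OF subst_eq_self]) (use vars_Den in \<open>force simp: \<tau>_def\<close>)
  ultimately have "Den m p ^ N = 0"
    using c by (simp add: subst_sum subst_mult)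
  then show False
    by (simp add: Den_neq_0)
qed

lemma regular_sequence_Mgen:
  assumes "1 \<le> p"
  shows "regular_sequence m p"
  unfolding regular_sequence_def
proof (intro conjI ballI allI impI)
  fix i F n
  assume i: "i \<in> {1..m}" and F: "vars F \<subseteq> Vk m m"
    and MF: "loc_eq m p (Vk m m) (i - 1) (Mgen m p i * F, n) (0, 0)"
  have "Vk m (i - 1) \<subseteq> Vk m m"
    using i by (intro Vk_mono) auto
  with i show "loc_eq m p (Vk m m) (i - 1) (F, n) (0, 0)"
    using Mgen_cancel[OF assms _ _ _ F MF] by auto
qed (rule quotient_neq_0[OF assms])

theorem mainTheorem10:
  fixes m p :: nat
  assumes "1 \<le> p" and "1 \<le> m"
  shows "(\<forall>k\<in>{1..m-1}.
            (\<forall>F n G n'. vars F \<subseteq> Vk m k \<longrightarrow> vars G \<subseteq> Vk m k \<longrightarrow>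
               (loc_eq m p (Vk m k) k (F, n) (G, n') \<longleftrightarrow>
                (\<forall>\<chi>\<in>PiE {1..k} (\<lambda>_. mu p).
                   loc_eq m p (Vk m 0) 0 (psi m k \<chi> F, n) (psi m k \<chi> G, n'))))
          \<and> (\<forall>F d \<chi>. vars F \<subseteq> Vk m k \<longrightarrow> xi_homog d F \<longrightarrow> \<chi> \<in> PiE {1..k} (\<lambda>_. mu p) \<longrightarrow>
               xi_homog d (psi m k \<chi> F)))
       \<and> xi_homog p (Mgen m p m)
       \<and> (\<forall>F n. vars F \<subseteq> Vk m (m-1) \<longrightarrow>
            loc_eq m p (Vk m (m-1)) (m-1) (Mgen m p m * F, n) (0, 0) \<longrightarrow>
            loc_eq m p (Vk m (m-1)) (m-1) (F, n) (0, 0))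
       \<and> regular_sequence m p"
proof (intro conjI ballI allI impI)
  fix k F n G n'
  assume "k \<in> {1..m-1}" "vars F \<subseteq> Vk m k" "vars G \<subseteq> Vk m k"
  then show "loc_eq m p (Vk m k) k (F, n) (G, n') \<longleftrightarrow>
      (\<forall>\<chi>\<in>mu_tuples p k. loc_eq m p (Vk m 0) 0 (psi m k \<chi> F, n) (psi m k \<chi> G, n'))"
    by (intro loc_eq_iff_psi_loc_eq[OF assms(1)]) auto
next
  fix F n
  assume "vars F \<subseteq> Vk m (m - 1)" "loc_eq m p (Vk m (m - 1)) (m - 1) (Mgen m p m * F, n) (0, 0)"
  then show "loc_eq m p (Vk m (m - 1)) (m - 1) (F, n) (0, 0)"
    by (rule Mgen_cancel[OF assms(1,2) order_refl order_refl])
qed (simp_all add: xi_homog_psi xi_homog_Mgen regular_sequence_Mgen[OF assms(1)])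

end
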